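(* For all $n$ and $m$, top-half approval is a $\frac{1}{3}$-expected-welfare-maximizing rule for every symmetric distribution $\mathcal{D}$ supported on $[0,1]$; that is, for every such $\mathcal{D}$ and every preference profile $\sigma$ on $n$ voters and $m$ alternatives, the alternative $f(\sigma)$ selected by top-half approval satisfies $\mathbb{E}[\mathrm{sw}(f(\sigma),u)]\ge\frac{1}{3}\max_{j\in A}\mathbb{E}[\mathrm{sw}(j,u)]$.
   Context: There are $n$ voters and $m$ alternatives $A=\{1,\dots,m\}$. A preference profile $\sigma$ consists of a ranking of $A$ for each voter. Given a distribution $\mathcal{D}$ and profile $\sigma$, a random utility profile $u$ consistent with $\sigma$ is generated as follows: independently for each voter $i$, draw $m$ i.i.d. samples from $\mathcal{D}$ and assign them, from highest to lowest, to the alternatives in the order of voter $i$'s ranking. The social welfare of $j$ is $\mathrm{sw}(j,u)=\sum_i u_{ij}$; expectations are over $u$. A distribution $\mathcal{D}$ on $[0,1]$ is symmetric if $\Pr_{x\sim\mathcal{D}}(x\le\frac12-\epsilon)=\Pr_{x\sim\mathcal{D}}(x\ge\frac12+\epsilon)$ for all $\epsilon\in[0,\frac12]$. Top-half approval is the scoring rule in which each voter gives $1$ point to each alternative in her top $\lceil m/2\rceil$ positions and $0$ to all others; it selects an alternative with the largest total score (ties broken arbitrarily). *)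

theory Defs
  imports "HOL-Probability.Probability"
begin

(* Alternatives A = {1..m}; positions 1..m (1 = top).
   A preference profile: sigma i k = the alternative voter i ranks at position k. *)
definition is_profile :: "nat \<Rightarrow> nat \<Rightarrow> (nat \<Rightarrow> nat \<Rightarrow> nat) \<Rightarrow> bool" where
  "is_profile n m \<sigma> \<longleftrightarrow> (\<forall>i<n. bij_betw (\<sigma> i) {1..m} {1..m})"

definition pos :: "nat \<Rightarrow> (nat \<Rightarrow> nat \<Rightarrow> nat) \<Rightarrow> nat \<Rightarrow> nat \<Rightarrow> nat" where
  "pos m \<sigma> i j = (THE k. k \<in> {1..m} \<and> \<sigma> i k = j)"

definition symmetric_dist :: "real measure \<Rightarrow> bool" where
  "symmetric_dist D \<longleftrightarrow> (\<forall>\<epsilon>\<in>{0..1/2}.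
      measure D {x. x \<le> 1/2 - \<epsilon>} = measure D {x. x \<ge> 1/2 + \<epsilon>})"

definition sample_space :: "nat \<Rightarrow> nat \<Rightarrow> real measure \<Rightarrow> (nat \<times> nat \<Rightarrow> real) measure" where
  "sample_space n m D = PiM ({..<n} \<times> {1..m}) (\<lambda>_. D)"

definition kth_highest :: "nat \<Rightarrow> (nat \<times> nat \<Rightarrow> real) \<Rightarrow> nat \<Rightarrow> nat \<Rightarrow> real" where
  "kth_highest m x i k = rev (sort (map (\<lambda>l. x (i, l)) [1..<m+1])) ! (k - 1)"

definition util :: "nat \<Rightarrow> (nat \<Rightarrow> nat \<Rightarrow> nat) \<Rightarrow> (nat \<times> nat \<Rightarrow> real) \<Rightarrow> nat \<Rightarrow> nat \<Rightarrow> real" where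
  "util m \<sigma> x i j = kth_highest m x i (pos m \<sigma> i j)"

definition sw :: "nat \<Rightarrow> nat \<Rightarrow> (nat \<Rightarrow> nat \<Rightarrow> nat) \<Rightarrow> nat \<Rightarrow> (nat \<times> nat \<Rightarrow> real) \<Rightarrow> real" where
  "sw n m \<sigma> j x = (\<Sum>i<n. util m \<sigma> x i j)"

definition expected_sw :: "nat \<Rightarrow> nat \<Rightarrow> real measure \<Rightarrow> (nat \<Rightarrow> nat \<Rightarrow> nat) \<Rightarrow> nat \<Rightarrow> real" where
  "expected_sw n m D \<sigma> j = (\<integral>x. sw n m \<sigma> j x \<partial>sample_space n m D)"

definition top_half_score :: "nat \<Rightarrow> nat \<Rightarrow> (nat \<Rightarrow> nat \<Rightarrow> nat) \<Rightarrow> nat \<Rightarrow> nat" where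
  "top_half_score n m \<sigma> j = card {i\<in>{..<n}. \<exists>k\<in>{1..nat \<lceil>real m / 2\<rceil>}. \<sigma> i k = j}"

definition top_half_winner :: "nat \<Rightarrow> nat \<Rightarrow> (nat \<Rightarrow> nat \<Rightarrow> nat) \<Rightarrow> nat \<Rightarrow> bool" where
  "top_half_winner n m \<sigma> w \<longleftrightarrow> w \<in> {1..m} \<and>
     (\<forall>j\<in>{1..m}. top_half_score n m \<sigma> j \<le> top_half_score n m \<sigma> w)"

end

theory Submission
  imports Defs
begin

(*
  Let mu k be the expected k-th highest of m i.i.d. samples from D, so that a voter
  contributes mu k to the expected welfare of the alternative she ranks k-th. Reflecting
  every sample by x |-> 1 - x preserves the sample distribution (D is symmetric about 1/2)
  and reverses the order of the samples, hence mu k = 1 - mu (m + 1 - k). As mu is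
  decreasing, mu k >= 1/2 on the top t = ceil(m/2) positions and mu k <= 1/2 below them.
  So an alternative with top-half score s has expected welfare between s/2 and (n + s)/2.
  The scores add up to n t >= n m / 2, so the winner's score s_w is at least n/2, and every
  alternative has expected welfare at most (n + s_w)/2 <= 3 s_w / 2, at most three times
  the winner's.
*)

section \<open>Order statistics of lists\<close>

lemma rev_sort_nth_antimono:
  fixes xs :: "'a::linorder list"
  assumes "a \<le> b" "b < length xs"
  shows "rev (sort xs) ! b \<le> rev (sort xs) ! a"
  using assms by (simp add: rev_nth sorted_nth_mono)

lemma sort_map_reflect:
  fixes xs :: "'a::linordered_ab_group_add list"
  shows "sort (map (\<lambda>v. c - v) xs) = rev (map (\<lambda>v. c - v) (sort xs))"
  by (rule properties_for_sort) (auto simp: sorted_rev_iff_nth_mono sorted_nth_mono)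

lemma rev_sort_map_reflect_nth:
  fixes xs :: "'a::linordered_ab_group_add list"
  assumes "k < length xs"
  shows "rev (sort (map (\<lambda>v. c - v) xs)) ! k = c - rev (sort xs) ! (length xs - 1 - k)"
  using assms by (simp add: sort_map_reflect rev_nth)

lemma le_rev_sort_nth_iff_less_length_filter:
  fixes xs :: "'a::linorder list"
  assumes k: "k < length xs"
  shows "c \<le> rev (sort xs) ! k \<longleftrightarrow> k < length (filter (\<lambda>v. c \<le> v) xs)"
proof -
  define ys where "ys = rev (sort xs)"
  have len: "length ys = length xs" by (simp add: ys_def)
  have "length (filter (\<lambda>v. c \<le> v) xs) = length (filter (\<lambda>v. c \<le> v) ys)"
    unfolding ys_def by (metis mset_filter size_mset mset_rev mset_sort)
  also have "\<dots> = length (filter (\<lambda>v. c \<le> v) (take (Suc k) ys))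
      + length (filter (\<lambda>v. c \<le> v) (drop (Suc k) ys))"
    by (metis append_take_drop_id filter_append length_append)
  finally have split: "length (filter (\<lambda>v. c \<le> v) xs) = \<dots>" .
  have head: "ys ! k \<le> ys ! p" if "p \<le> k" for p
    unfolding ys_def by (rule rev_sort_nth_antimono) (use that k in auto)
  have tail: "ys ! p \<le> ys ! k" if "k \<le> p" "p < length ys" for p
    unfolding ys_def by (rule rev_sort_nth_antimono) (use that len in auto)
  show ?thesis
  proof
    assume "c \<le> rev (sort xs) ! k"
    then have "c \<le> ys ! p" if "p \<le> k" for p
      using head[OF that] unfolding ys_def by order
    then have "\<forall>v\<in>set (take (Suc k) ys). c \<le> v"
      by (auto simp: in_set_conv_nth)
    then have "filter (\<lambda>v. c \<le> v) (take (Suc k) ys) = take (Suc k) ys"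
      by simp
    then show "k < length (filter (\<lambda>v. c \<le> v) xs)"
      using split k len by simp
  next
    assume "k < length (filter (\<lambda>v. c \<le> v) xs)"
    show "c \<le> rev (sort xs) ! k"
    proof (rule ccontr)
      assume "\<not> c \<le> rev (sort xs) ! k"
      then have "\<not> c \<le> ys ! p" if "k \<le> p" "p < length ys" for p
        using tail[OF that] unfolding ys_def by order
      then have "filter (\<lambda>v. c \<le> v) (drop (Suc k) ys) = []"
        by (auto simp: filter_empty_conv in_set_conv_nth)
      moreover have "length (filter (\<lambda>v. c \<le> v) (take k ys)) \<le> k"
        by (metis length_filter_le length_take min.bounded_iff)
      ultimately show False
        using split k len \<open>\<not> c \<le> rev (sort xs) ! k\<close> \<open>k < length (filter (\<lambda>v. c \<le> v) xs)\<close>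
        by (simp add: take_Suc_conv_app_nth ys_def)
    qed
  qed
qed

lemma kth_highest_cong:
  assumes "\<And>l. l \<in> {1..m} \<Longrightarrow> x (i, l) = y (i, l)"
  shows "kth_highest m x i k = kth_highest m y i k"
proof -
  have samples_eq: "map (\<lambda>l. x (i, l)) [1..<m+1] = map (\<lambda>l. y (i, l)) [1..<m+1]"
    using assms by (intro map_cong) auto
  show ?thesis unfolding kth_highest_def samples_eq ..
qed

lemma kth_highest_in_samples:
  assumes "1 \<le> k" "k \<le> m"
  shows "kth_highest m x i k \<in> (\<lambda>l. x (i, l)) ` {1..m}"
proof -
  have "kth_highest m x i k \<in> set (rev (sort (map (\<lambda>l. x (i, l)) [1..<m+1])))"
    unfolding kth_highest_def by (rule nth_mem) (use assms in simp)
  then show ?thesis by auto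
qed

lemma kth_highest_reflect:
  assumes "1 \<le> k" "k \<le> m"
  shows "kth_highest m (\<lambda>p. c - x p) i k = c - kth_highest m x i (m + 1 - k)"
  using rev_sort_map_reflect_nth[of "k - 1" "map (\<lambda>l. x (i, l)) [1..<m+1]" c] assms
  unfolding kth_highest_def by (simp add: comp_def)

lemma le_kth_highest_iff_count:
  fixes x :: "nat \<times> nat \<Rightarrow> real"
  assumes "1 \<le> k" "k \<le> m"
  shows "c \<le> kth_highest m x i k \<longleftrightarrow> real k \<le> (\<Sum>l\<in>{1..m}. if c \<le> x (i, l) then 1 else 0)"
proof -
  let ?xs = "map (\<lambda>l. x (i, l)) [1..<m+1]"
  have "c \<le> kth_highest m x i k \<longleftrightarrow> k - 1 < length (filter (\<lambda>v. c \<le> v) ?xs)"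
    unfolding kth_highest_def by (rule le_rev_sort_nth_iff_less_length_filter) (use assms in simp)
  also have "\<dots> \<longleftrightarrow> k \<le> card ({l. c \<le> x (i, l)} \<inter> {1..m})"
    using assms
    by (simp add: filter_map distinct_length_filter atLeastLessThanSuc_atLeastAtMost del: upt_Suc) arith
  also have "\<dots> \<longleftrightarrow> real k \<le> (\<Sum>l\<in>{1..m}. if c \<le> x (i, l) then 1 else 0)"
    by (simp add: sum.inter_filter[symmetric] Int_def conj_ac)
  finally show ?thesis .
qed

section \<open>Preference profiles and top-half scores\<close>

lemma nat_ceiling_half: "nat \<lceil>real m / 2\<rceil> = (m + 1) div 2"
proof (cases "even m")
  case False
  then obtain q where "m = 2 * q + 1" by (blast elim: oddE)
  moreover have "\<lceil>real (2 * q + 1) / 2\<rceil> = int q + 1"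
    by (intro ceiling_unique) auto
  ultimately show ?thesis by simp
qed auto

lemma profile_pos:
  assumes "is_profile n m \<sigma>" "i < n" "j \<in> {1..m}"
  shows "pos m \<sigma> i j \<in> {1..m}" "\<sigma> i (pos m \<sigma> i j) = j"
proof -
  have bij: "bij_betw (\<sigma> i) {1..m} {1..m}"
    using assms unfolding is_profile_def by auto
  then obtain k where k: "k \<in> {1..m}" "\<sigma> i k = j"
    using assms(3) unfolding bij_betw_def by (metis imageE)
  have "\<exists>!k. k \<in> {1..m} \<and> \<sigma> i k = j"
  proof (rule ex1I[of _ k])
    fix k' assume "k' \<in> {1..m} \<and> \<sigma> i k' = j"
    with k bij show "k' = k"
      unfolding bij_betw_def by (metis inj_onD)
  qed (use k in simp)
  then have "pos m \<sigma> i j \<in> {1..m} \<and> \<sigma> i (pos m \<sigma> i j) = j"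
    unfolding pos_def by (rule theI')
  then show "pos m \<sigma> i j \<in> {1..m}" "\<sigma> i (pos m \<sigma> i j) = j"
    by auto
qed

lemma profile_ranked_within_iff_pos_le:
  assumes "is_profile n m \<sigma>" "i < n" "j \<in> {1..m}" "t \<le> m"
  shows "(\<exists>k\<in>{1..t}. \<sigma> i k = j) \<longleftrightarrow> pos m \<sigma> i j \<le> t"
proof
  assume "\<exists>k\<in>{1..t}. \<sigma> i k = j"
  then obtain k where k: "k \<in> {1..t}" "\<sigma> i k = \<sigma> i (pos m \<sigma> i j)"
    using profile_pos(2)[OF assms(1-3)] by auto
  have "inj_on (\<sigma> i) {1..m}"
    using assms unfolding is_profile_def bij_betw_def by auto
  then have "k = pos m \<sigma> i j"
    using k profile_pos(1)[OF assms(1-3)] assms(4) by (auto elim: inj_onD)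
  then show "pos m \<sigma> i j \<le> t"
    using k(1) by simp
next
  assume "pos m \<sigma> i j \<le> t"
  then show "\<exists>k\<in>{1..t}. \<sigma> i k = j"
    using profile_pos[OF assms(1-3)] by auto
qed

lemma sum_card_ranked_within:
  assumes "is_profile n m \<sigma>" "t \<le> m"
  shows "(\<Sum>j\<in>{1..m}. card {i\<in>{..<n}. \<exists>k\<in>{1..t}. \<sigma> i k = j}) = n * t"
proof -
  have "card {j\<in>{1..m}. \<exists>k\<in>{1..t}. \<sigma> i k = j} = t" if "i < n" for i
  proof -
    have "bij_betw (\<sigma> i) {1..m} {1..m}"
      using assms that unfolding is_profile_def by auto
    then have "inj_on (\<sigma> i) {1..t}" and "{j\<in>{1..m}. \<exists>k\<in>{1..t}. \<sigma> i k = j} = \<sigma> i ` {1..t}"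
      using assms(2) unfolding bij_betw_def by (auto intro: inj_on_subset)
    then show ?thesis by (simp add: card_image)
  qed
  then show ?thesis
    by (subst sum_multicount) auto
qed

lemma top_half_score_eq_sum:
  assumes "is_profile n m \<sigma>" "j \<in> {1..m}"
  shows "real (top_half_score n m \<sigma> j) = (\<Sum>i<n. if pos m \<sigma> i j \<le> nat \<lceil>real m / 2\<rceil> then 1 else 0)"
proof -
  let ?t = "nat \<lceil>real m / 2\<rceil>"
  have "?t \<le> m"
    using nat_ceiling_half[of m] by simp
  then have "top_half_score n m \<sigma> j = card {i\<in>{..<n}. pos m \<sigma> i j \<le> ?t}"
    unfolding top_half_score_def using profile_ranked_within_iff_pos_le[OF assms(1) _ assms(2)]
    by (intro arg_cong[where f = card] Collect_cong) blast
  then show ?thesis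
    by (simp add: sum.inter_filter[symmetric])
qed

lemma top_half_winner_score_ge:
  assumes "is_profile n m \<sigma>" "top_half_winner n m \<sigma> w"
  shows "n \<le> 2 * top_half_score n m \<sigma> w"
proof -
  define t where "t = nat \<lceil>real m / 2\<rceil>"
  have w: "w \<in> {1..m}" "\<And>j. j \<in> {1..m} \<Longrightarrow> top_half_score n m \<sigma> j \<le> top_half_score n m \<sigma> w"
    using assms(2) unfolding top_half_winner_def by auto
  have t: "t \<le> m" "m \<le> 2 * t"
    using nat_ceiling_half[of m] w(1) unfolding t_def by auto
  have "n * t = (\<Sum>j\<in>{1..m}. top_half_score n m \<sigma> j)"
    unfolding top_half_score_def t_def[symmetric] using sum_card_ranked_within[OF assms(1) t(1)] by simp
  also have "\<dots> \<le> m * top_half_score n m \<sigma> w"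
    using sum_mono[of "{1..m}", OF w(2)] by simp
  finally have "n * t \<le> m * top_half_score n m \<sigma> w" .
  have "m * n \<le> 2 * t * n"
    using t(2) by (rule mult_le_mono1)
  also have "\<dots> \<le> m * (2 * top_half_score n m \<sigma> w)"
    using \<open>n * t \<le> m * top_half_score n m \<sigma> w\<close> by (simp add: mult.commute)
  finally show ?thesis
    using w(1) by simp
qed

section \<open>Distributions symmetric about 1/2\<close>

lemma real_distribution_reflection_eqI:
  fixes M :: "real measure"
  assumes "real_distribution M"
    and lower_eq_upper: "\<And>a. a \<le> 1/2 \<Longrightarrow> measure M {..a} = measure M {1 - a..}"
  shows "distr M borel (\<lambda>x. 1 - x) = M"
proof -
  interpret M: real_distribution M by fact
  define N where "N = distr M borel (\<lambda>x. 1 - x)"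
  have N_distribution: "real_distribution N"
    unfolding N_def by (rule M.real_distribution_distr) simp
  interpret N: real_distribution N by (rule N_distribution)
  have measure_N: "measure N A = measure M ((\<lambda>x. 1 - x) -` A)" if "A \<in> sets borel" for A
    unfolding N_def using that by (subst measure_distr) auto
  have cdf_N: "cdf N a = measure M {1 - a..}" for a
    unfolding cdf_def by (subst measure_N) (auto intro!: arg_cong[where f = "measure M"])
  have "cdf N a = cdf M a" for a
  proof (cases "a \<le> 1/2")
    case True
    then show ?thesis using cdf_N lower_eq_upper by (simp add: cdf_def)
  next
    case False
    define b where "b = 1 - a"
    \<comment> \<open>The hypothesis only controls closed tails; the open tail \<open>{..<b}\<close> is the left
      limit at \<open>b\<close> of both cdfs, which agree to the left of \<open>b < 1/2\<close>.\<close>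
    have "eventually (\<lambda>x. cdf N x = cdf M x) (at_left b)"
      using False cdf_N lower_eq_upper
      by (intro eventually_at_leftI[of "b - 1"]) (auto simp: cdf_def b_def)
    then have "(cdf M \<longlongrightarrow> measure N {..<b}) (at_left b)"
      by (rule Lim_transform_eventually[OF N.cdf_at_left])
    with M.cdf_at_left have left_limit: "measure M {..<b} = measure N {..<b}"
      by (rule tendsto_unique[OF trivial_limit_at_left_real])
    have "cdf N a = measure M {b..}"
      using cdf_N b_def by simp
    also have "\<dots> = 1 - measure M {..<b}"
      using M.prob_compl[of "{..<b}"] by (simp add: Compl_eq_Diff_UNIV[symmetric] Compl_lessThan)
    also have "\<dots> = 1 - measure M {a<..}"
      using left_limit measure_N[of "{..<b}"] by (simp add: b_def vimage_def greaterThan_def)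
    also have "\<dots> = cdf M a"
      using M.prob_compl[of "{a<..}"] by (simp add: cdf_def Compl_eq_Diff_UNIV[symmetric] Compl_greaterThan)
    finally show ?thesis by simp
  qed
  then show ?thesis
    using cdf_unique[OF N_distribution assms(1)] by (auto simp: N_def)
qed

section \<open>Expected order statistics\<close>

definition expected_kth_highest :: "nat \<Rightarrow> nat \<Rightarrow> real measure \<Rightarrow> nat \<Rightarrow> nat \<Rightarrow> real" where
  "expected_kth_highest n m D i k = (\<integral>x. kth_highest m x i k \<partial>sample_space n m D)"

locale unit_interval_distribution = real_distribution D for D :: "real measure" +
  assumes prob_unit_interval: "measure D {0..1} = 1"
begin

lemma prob_disjoint_unit_interval:
  assumes "A \<in> sets borel" "A \<inter> {0..1} = {}"
  shows "measure D A = 0"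
proof -
  have "measure D A \<le> measure D (space D - {0..1})"
    using assms by (intro finite_measure_mono) auto
  also have "\<dots> = 0"
    using prob_compl[of "{0..1}"] prob_unit_interval by simp
  finally show ?thesis by (simp add: measure_le_0_iff)
qed

lemma prob_space_sample_space: "prob_space (sample_space n m D)"
  unfolding sample_space_def by (intro prob_space_PiM prob_space_axioms)

lemma kth_highest_measurable [measurable]:
  assumes "i < n" "1 \<le> k" "k \<le> m"
  shows "(\<lambda>x. kth_highest m x i k) \<in> borel_measurable (sample_space n m D)"
  unfolding borel_measurable_iff_ge
proof
  fix c
  have [measurable]: "(\<lambda>x. x (i, l)) \<in> borel_measurable (sample_space n m D)" if "l \<in> {1..m}" for l
    unfolding sample_space_def measurable_cong_sets[OF refl events_eq_borel[symmetric]]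
    by (rule measurable_component_singleton) (use assms that in auto)
  show "{x \<in> space (sample_space n m D). c \<le> kth_highest m x i k} \<in> sets (sample_space n m D)"
    unfolding le_kth_highest_iff_count[OF assms(2,3)] by measurable
qed

lemma AE_kth_highest_unit_interval:
  assumes "i < n" "1 \<le> k" "k \<le> m"
  shows "AE x in sample_space n m D. kth_highest m x i k \<in> {0..1}"
proof -
  have "AE v in D. v \<in> {0..1}"
    by (rule AE_prob_1[OF prob_unit_interval])
  then have "AE x in sample_space n m D. \<forall>l\<in>{1..m}. x (i, l) \<in> {0..1}"
    unfolding sample_space_def using assms(1)
    by (intro AE_finite_allI AE_PiM_component) (auto intro: prob_space_axioms)
  then show ?thesis
  proof eventually_elim
    case (elim x)
    then have "(\<lambda>l. x (i, l)) ` {1..m} \<subseteq> {0..1}" by blast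
    with kth_highest_in_samples[OF assms(2,3)] show ?case by blast
  qed
qed

lemma integrable_kth_highest:
  assumes "i < n" "1 \<le> k" "k \<le> m"
  shows "integrable (sample_space n m D) (\<lambda>x. kth_highest m x i k)"
proof -
  interpret S: prob_space "sample_space n m D" by (rule prob_space_sample_space)
  show ?thesis
  proof (rule S.integrable_const_bound[where B = 1])
    show "AE x in sample_space n m D. norm (kth_highest m x i k) \<le> 1"
      using AE_kth_highest_unit_interval[OF assms] by eventually_elim auto
  qed (rule kth_highest_measurable[OF assms])
qed


lemma expected_kth_highest_unit_interval:
  assumes "i < n" "1 \<le> k" "k \<le> m"
  shows "expected_kth_highest n m D i k \<in> {0..1}"
proof -
  interpret S: prob_space "sample_space n m D" by (rule prob_space_sample_space)
  have "(\<integral>x. kth_highest m x i k \<partial>sample_space n m D) \<le> (\<integral>x. 1 \<partial>sample_space n m D)"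
    using AE_kth_highest_unit_interval[OF assms]
    by (intro integral_mono_AE integrable_kth_highest[OF assms]) (auto elim: eventually_mono)
  moreover have "0 \<le> (\<integral>x. kth_highest m x i k \<partial>sample_space n m D)"
    using AE_kth_highest_unit_interval[OF assms] by (intro integral_nonneg_AE) (auto elim: eventually_mono)
  ultimately show ?thesis
    unfolding expected_kth_highest_def by (simp add: S.prob_space)
qed

lemma expected_kth_highest_antimono:
  assumes "i < n" "1 \<le> k" "k \<le> k'" "k' \<le> m"
  shows "expected_kth_highest n m D i k' \<le> expected_kth_highest n m D i k"
  unfolding expected_kth_highest_def
  using assms integrable_kth_highest[of i n]
  by (intro integral_mono) (auto simp: kth_highest_def intro!: rev_sort_nth_antimono)

lemma expected_sw_eq_sum:
  assumes "is_profile n m \<sigma>" "j \<in> {1..m}"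
  shows "expected_sw n m D \<sigma> j = (\<Sum>i<n. expected_kth_highest n m D i (pos m \<sigma> i j))"
  unfolding expected_sw_def sw_def util_def expected_kth_highest_def
  using profile_pos(1)[OF assms(1) _ assms(2)]
  by (intro Bochner_Integration.integral_sum integrable_kth_highest) auto

end

locale symmetric_unit_interval_distribution = unit_interval_distribution +
  assumes symmetric: "symmetric_dist D"
begin

lemma prob_atMost_eq_prob_atLeast_reflected:
  assumes "a \<le> 1/2"
  shows "measure D {..a} = measure D {1 - a..}"
proof (cases "a < 0")
  case True
  then show ?thesis
    using prob_disjoint_unit_interval[of "{..a}"] prob_disjoint_unit_interval[of "{1 - a..}"] by auto
next
  case False
  then have "1/2 - a \<in> {0..1/2}" using assms by simp
  with symmetric have "measure D {x. x \<le> 1/2 - (1/2 - a)} = measure D {x. x \<ge> 1/2 + (1/2 - a)}"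
    unfolding symmetric_dist_def by blast
  then show ?thesis by (simp add: atMost_def atLeast_def)
qed

lemma distr_reflection: "distr D borel (\<lambda>x. 1 - x) = D"
proof (rule real_distribution_reflection_eqI)
  show "real_distribution D"
    by (simp add: real_distribution_def real_distribution_axioms_def prob_space_axioms)
qed (rule prob_atMost_eq_prob_atLeast_reflected)

lemma sample_space_reflection:
  "distr (sample_space n m D) (sample_space n m D) (compose ({..<n} \<times> {1..m}) (\<lambda>v. 1 - v))
     = sample_space n m D"
proof -
  have "distr D D (\<lambda>v. 1 - v) = D"
    using distr_reflection by (metis distr_cong events_eq_borel)
  then show ?thesis
    unfolding sample_space_def
    by (subst distr_PiM_finite_prob_space') (auto intro: prob_space_axioms simp: events_eq_borel)
qed

lemma expected_kth_highest_reflect: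
  assumes "i < n" "1 \<le> k" "k \<le> m"
  shows "expected_kth_highest n m D i k = 1 - expected_kth_highest n m D i (m + 1 - k)"
proof -
  let ?S = "sample_space n m D" and ?R = "compose ({..<n} \<times> {1..m}) (\<lambda>v::real. 1 - v)"
  interpret S: prob_space ?S by (rule prob_space_sample_space)
  have R_measurable: "?R \<in> measurable ?S ?S"
    unfolding sample_space_def compose_def by measurable
  have kth_R: "kth_highest m (?R x) i k = 1 - kth_highest m x i (m + 1 - k)" for x
    using kth_highest_cong[of m "?R x" i "\<lambda>p. 1 - x p"] kth_highest_reflect[OF assms(2,3)] assms(1)
    by (simp add: compose_def)
  have "expected_kth_highest n m D i k = (\<integral>x. kth_highest m x i k \<partial>distr ?S ?S ?R)"
    unfolding expected_kth_highest_def using sample_space_reflection by simp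
  also have "\<dots> = (\<integral>x. kth_highest m (?R x) i k \<partial>?S)"
    by (rule integral_distr[OF R_measurable kth_highest_measurable[OF assms]])
  also have "\<dots> = (\<integral>x. 1 - kth_highest m x i (m + 1 - k) \<partial>?S)"
    unfolding kth_R ..
  also have "\<dots> = 1 - expected_kth_highest n m D i (m + 1 - k)"
    using integrable_kth_highest[of i n "m + 1 - k" m] assms
    by (simp add: expected_kth_highest_def S.prob_space)
  finally show ?thesis .
qed

lemma expected_kth_highest_upper_half:
  assumes "i < n" "1 \<le> k" "2 * k \<le> m + 1"
  shows "1/2 \<le> expected_kth_highest n m D i k"
proof -
  have "expected_kth_highest n m D i (m + 1 - k) \<le> expected_kth_highest n m D i k"
    by (rule expected_kth_highest_antimono) (use assms in auto)
  moreover have "expected_kth_highest n m D i k = 1 - expected_kth_highest n m D i (m + 1 - k)"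
    by (rule expected_kth_highest_reflect) (use assms in auto)
  ultimately show ?thesis by simp
qed

lemma expected_kth_highest_lower_half:
  assumes "i < n" "m + 1 \<le> 2 * k" "k \<le> m"
  shows "expected_kth_highest n m D i k \<le> 1/2"
proof -
  have "expected_kth_highest n m D i k \<le> expected_kth_highest n m D i (m + 1 - k)"
    by (rule expected_kth_highest_antimono) (use assms in auto)
  moreover have "expected_kth_highest n m D i k = 1 - expected_kth_highest n m D i (m + 1 - k)"
    by (rule expected_kth_highest_reflect) (use assms in auto)
  ultimately show ?thesis by simp
qed

lemma expected_kth_highest_top_half:
  assumes "i < n" "1 \<le> k" "k \<le> m"
  shows "expected_kth_highest n m D i k \<in> (if k \<le> nat \<lceil>real m / 2\<rceil> then {1/2..1} else {0..1/2})"
  using expected_kth_highest_unit_interval[OF assms] nat_ceiling_half[of m] assms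
    expected_kth_highest_upper_half[of i n k m] expected_kth_highest_lower_half[of i n m k]
  by auto

lemma half_top_half_score_le_expected_sw:
  assumes "is_profile n m \<sigma>" "j \<in> {1..m}"
  shows "top_half_score n m \<sigma> j / 2 \<le> expected_sw n m D \<sigma> j"
proof -
  have "top_half_score n m \<sigma> j / 2 = (\<Sum>i<n. if pos m \<sigma> i j \<le> nat \<lceil>real m / 2\<rceil> then 1/2 else 0)"
    unfolding top_half_score_eq_sum[OF assms] sum_divide_distrib by (intro sum.cong) auto
  also have "\<dots> \<le> (\<Sum>i<n. expected_kth_highest n m D i (pos m \<sigma> i j))"
  proof (rule sum_mono)
    fix i assume "i \<in> {..<n}"
    with profile_pos(1)[OF assms(1) _ assms(2)] expected_kth_highest_top_half[of i n "pos m \<sigma> i j" m]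
    show "(if pos m \<sigma> i j \<le> nat \<lceil>real m / 2\<rceil> then 1/2 else 0) \<le> expected_kth_highest n m D i (pos m \<sigma> i j)"
      by (auto split: if_splits)
  qed
  finally show ?thesis
    unfolding expected_sw_eq_sum[OF assms] .
qed

lemma expected_sw_le_half_voters_plus_score:
  assumes "is_profile n m \<sigma>" "j \<in> {1..m}"
  shows "expected_sw n m D \<sigma> j \<le> (real n + top_half_score n m \<sigma> j) / 2"
proof -
  have "expected_sw n m D \<sigma> j \<le> (\<Sum>i<n. (1 + (if pos m \<sigma> i j \<le> nat \<lceil>real m / 2\<rceil> then 1 else 0)) / 2)"
    unfolding expected_sw_eq_sum[OF assms]
  proof (rule sum_mono)
    fix i assume "i \<in> {..<n}"
    with profile_pos(1)[OF assms(1) _ assms(2)] expected_kth_highest_top_half[of i n "pos m \<sigma> i j" m]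
    show "expected_kth_highest n m D i (pos m \<sigma> i j) \<le> (1 + (if pos m \<sigma> i j \<le> nat \<lceil>real m / 2\<rceil> then 1 else 0)) / 2"
      by (auto split: if_splits)
  qed
  also have "\<dots> = (real n + top_half_score n m \<sigma> j) / 2"
    unfolding top_half_score_eq_sum[OF assms] sum_divide_distrib[symmetric] sum.distrib by simp
  finally show ?thesis .
qed

end

theorem theorem5:
  fixes n m :: nat and D :: "real measure" and \<sigma> :: "nat \<Rightarrow> nat \<Rightarrow> nat" and w :: nat
  assumes "prob_space D" and "sets D = sets borel"
    and "measure D {0..1} = 1"
    and "symmetric_dist D"
    and "is_profile n m \<sigma>"
    and "top_half_winner n m \<sigma> w"
  shows "expected_sw n m D \<sigma> w \<ge> (1/3) * (MAX j\<in>{1..m}. expected_sw n m D \<sigma> j)"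
proof -
  interpret symmetric_unit_interval_distribution D
    using assms(1-4)
    by (simp add: symmetric_unit_interval_distribution_def symmetric_unit_interval_distribution_axioms_def
        unit_interval_distribution_def unit_interval_distribution_axioms_def
        real_distribution_def real_distribution_axioms_def)
  have w: "w \<in> {1..m}" "\<And>j. j \<in> {1..m} \<Longrightarrow> top_half_score n m \<sigma> j \<le> top_half_score n m \<sigma> w"
    using assms(6) unfolding top_half_winner_def by auto
  have "expected_sw n m D \<sigma> j \<le> 3 * expected_sw n m D \<sigma> w" if j: "j \<in> {1..m}" for j
  proof -
    have "expected_sw n m D \<sigma> j \<le> (real n + top_half_score n m \<sigma> j) / 2"
      by (rule expected_sw_le_half_voters_plus_score[OF assms(5) j])
    also have "\<dots> \<le> 3 * (top_half_score n m \<sigma> w / 2)"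
      using top_half_winner_score_ge[OF assms(5,6)] w(2)[OF j] by simp
    also have "\<dots> \<le> 3 * expected_sw n m D \<sigma> w"
      using half_top_half_score_le_expected_sw[OF assms(5) w(1)] by simp
    finally show ?thesis .
  qed
  then have "(MAX j\<in>{1..m}. expected_sw n m D \<sigma> j) \<le> 3 * expected_sw n m D \<sigma> w"
    using w(1) by (intro Max.boundedI) auto
  then show ?thesis
    by simp
qed

end
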